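(* Assume $\|\mathbf G^{(l)}\|\le A_0B_0^{l-1}$ for all $l\ge1$. For each eigenvalue $\mu=\lambda\pm\mathrm i\sqrt{1-\lambda^2}$ of $\mathbf U$ with $\lambda\in\sigma(\mathbf T)$, $|\lambda|<1$, the perturbed eigenvalue $\mu(\chi)=\lambda(\chi)\pm\mathrm i\sqrt{1-\lambda(\chi)^2}$ has an expansion $\mu(\chi)=\mu+\sum_{n\ge1}\chi^n\mu^{(n)}$ near $\chi=0$, and there exist constants $A_{13},B_{13}>0$ such that $|\mu^{(n)}|\le A_{13}B_{13}^{n-1}$ for all $n\ge1$; consequently the coefficients $a_1(n;m)$ of $\chi^n$ in $\mu(\chi)^{2m}$ satisfy $|a_1(n;m)|\le A_{14}B_{14}^{n-1}$ for constants $A_{14},B_{14}>0$ (depending also on $m$).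
   Context: $\mathbf G=[g_{ij}]$ is an $N\times N$ Google matrix with all entries positive. Perturbation: $\mathbf G(\chi)=[g_{ij}(\chi)]=\mathbf G+\sum_{l\ge1}\chi^l\mathbf G^{(l)}$, $\chi\in\mathbb C$, convergent near $0$, $\|\cdot\|$ the operator $2$-norm; for real $\chi$ near $0$, $\mathbf G(\chi)$ is row-stochastic with positive entries. $\mathbf T(\chi)=[\sqrt{g_{ij}(\chi)g_{ji}(\chi)}]$, $\mathbf T=\mathbf T(0)$; $\lambda(\chi)$ denotes the analytic eigenvalue branch of $\mathbf T(\chi)$ through the eigenvalue $\lambda$ of $\mathbf T$. $\mathbf U=\mathbf S_w(2\mathbf B-\mathbf I)$ with $\mathbf B=\sum_j|\psi_j\rangle\langle\psi_j|$, $|\psi_j\rangle=|j\rangle\otimes\sum_k\sqrt{g_{jk}}|k\rangle$, $\mathbf S_w=\sum_{j,k}|k,j\rangle\langle j,k|$; its eigenvalues associated with $\mathbf T$ are $\lambda\pm\mathrm i\sqrt{1-\lambda^2}$, $\lambda\in\sigma(\mathbf T)$. The square root branch is chosen holomorphic in $\chi$ near $0$. *)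

theory Defs
  imports "HOL-Analysis.Analysis"
begin

definition op2norm :: "complex^'n^'n \<Rightarrow> real" where
  "op2norm A = onorm (\<lambda>x::complex^'n. A *v x)"

definition pert_entry :: "complex^'n^'n \<Rightarrow> (nat \<Rightarrow> complex^'n^'n) \<Rightarrow> complex \<Rightarrow> 'n \<Rightarrow> 'n \<Rightarrow> complex" where
  "pert_entry G Gp z i j = G $ i $ j + (\<Sum>l. z ^ Suc l * (Gp (Suc l) $ i $ j))"

definition Tmat :: "complex^'n^'n \<Rightarrow> (nat \<Rightarrow> complex^'n^'n) \<Rightarrow> complex \<Rightarrow> complex^'n^'n" where
  "Tmat G Gp z = (\<chi> i j. csqrt (pert_entry G Gp z i j * pert_entry G Gp z j i))"

definition is_eigenvalue :: "complex^'n^'n \<Rightarrow> complex \<Rightarrow> bool" where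
  "is_eigenvalue A z \<longleftrightarrow> (\<exists>v. v \<noteq> 0 \<and> A *v v = z *s v)"

definition pos_stochastic :: "(('n::finite) \<Rightarrow> 'n \<Rightarrow> complex) \<Rightarrow> bool" where
  "pos_stochastic g \<longleftrightarrow> (\<forall>i j. g i j \<in> \<real> \<and> Re (g i j) > 0) \<and> (\<forall>i. (\<Sum>j\<in>UNIV. g i j) = 1)"

definition tcoeff :: "(complex \<Rightarrow> complex) \<Rightarrow> nat \<Rightarrow> complex" where
  "tcoeff f n = (deriv ^^ n) f 0 / fact n"

end

theory Submission
  imports Defs "HOL-Complex_Analysis.Complex_Analysis"
begin

text \<open>The analytic branch \<open>\<lambda>(\<chi>)\<close> stays inside the unit disc near \<open>\<chi> = 0\<close>, where
  \<open>1 - \<lambda>(\<chi>)\<^sup>2\<close> avoids the branch cut of \<open>csqrt\<close>; hence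
  \<open>\<mu>(\<chi>) = \<lambda>(\<chi>) \<pm> i \<surd>(1 - \<lambda>(\<chi>)\<^sup>2)\<close> and all its powers are holomorphic on a disc around 0.
  A holomorphic function on a disc is the sum of its Taylor series there, and the Cauchy
  estimates on a smaller circle of radius \<open>\<rho>\<close> give \<open>|a\<^sub>n| \<le> M / \<rho>\<^sup>n\<close>, i.e. geometric
  coefficient bounds. The bound on the \<open>G\<^sup>(\<^sup>l\<^sup>)\<close> and the eigenvalue property are only needed
  to produce the analytic branch, which the hypotheses already provide.\<close>

lemma tcoeff_sums:
  assumes "f holomorphic_on ball 0 r" "z \<in> ball 0 r"
  shows "(\<lambda>n. tcoeff f n * z ^ n) sums f z"
  using holomorphic_power_series[OF assms] by (simp add: tcoeff_def)

lemma tcoeff_geometric_bound: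
  fixes f :: "complex \<Rightarrow> complex"
  assumes hol: "f holomorphic_on ball 0 r" and r: "r > 0"
  obtains A B where "A > 0" "B > 0" "\<And>n. n \<ge> 1 \<Longrightarrow> cmod (tcoeff f n) \<le> A * B ^ (n - 1)"
proof -
  define \<rho> where "\<rho> = r / 2"
  have \<rho>: "\<rho> > 0" and sub: "cball 0 \<rho> \<subseteq> ball 0 r" using r by (auto simp: \<rho>_def)
  have cont: "continuous_on (cball 0 \<rho>) f"
    using holomorphic_on_imp_continuous_on[OF hol] sub by (rule continuous_on_subset)
  have "bounded (f ` cball 0 \<rho>)"
    by (rule compact_imp_bounded[OF compact_continuous_image[OF cont compact_cball]])
  then obtain M where M: "M > 0" "\<And>x. x \<in> cball 0 \<rho> \<Longrightarrow> cmod (f x) \<le> M"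
    by (auto simp: bounded_pos)
  have holr: "f holomorphic_on ball 0 \<rho>"
    using hol sub ball_subset_cball by (blast intro: holomorphic_on_subset)
  have "cmod (tcoeff f n) \<le> M / \<rho> * (1 / \<rho>) ^ (n - 1)" if n: "n \<ge> 1" for n
  proof -
    have "norm ((deriv ^^ n) f 0) \<le> fact n * M / \<rho> ^ n"
      by (rule Cauchy_inequality[OF holr cont \<rho>]) (simp add: M(2))
    then have "cmod (tcoeff f n) \<le> M / \<rho> ^ n"
      using \<rho> by (simp add: tcoeff_def norm_divide field_simps)
    also have "M / \<rho> ^ n = M / \<rho> * (1 / \<rho>) ^ (n - 1)"
      using n by (cases n) (simp_all add: power_one_over)
    finally show ?thesis .
  qed
  moreover have "M / \<rho> > 0" "1 / \<rho> > 0" using M(1) \<rho> by simp_all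
  ultimately show ?thesis using that by blast
qed

lemma one_minus_square_notin_nonpos_Reals:
  fixes w :: complex
  assumes "cmod w < 1"
  shows "1 - w\<^sup>2 \<notin> \<real>\<^sub>\<le>\<^sub>0"
proof
  assume "1 - w\<^sup>2 \<in> \<real>\<^sub>\<le>\<^sub>0"
  then have "1 \<le> Re (w\<^sup>2)" by (auto simp: complex_nonpos_Reals_iff)
  moreover have "Re (w\<^sup>2) \<le> cmod (w\<^sup>2)" by (rule complex_Re_le_cmod)
  moreover have "cmod (w\<^sup>2) < 1"
    using assms by (simp add: norm_power abs_square_less_1)
  ultimately show False by simp
qed

lemma holomorphic_on_unitary_branch:
  assumes "f holomorphic_on S" "\<And>z. z \<in> S \<Longrightarrow> cmod (f z) < 1"
  shows "(\<lambda>z. f z + c * csqrt (1 - (f z)\<^sup>2)) holomorphic_on S"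
  using assms one_minus_square_notin_nonpos_Reals
  by (intro holomorphic_intros holomorphic_on_csqrt') auto

lemma holomorphic_small_near_zero:
  assumes hol: "f holomorphic_on ball 0 r" and r: "r > 0" and small: "cmod (f 0) < 1"
  obtains r' where "r' > 0" "f holomorphic_on ball 0 r'" "\<And>z. z \<in> ball 0 r' \<Longrightarrow> cmod (f z) < 1"
proof -
  have "open (ball 0 r \<inter> f -` ball 0 1)"
    using continuous_open_preimage[OF holomorphic_on_imp_continuous_on[OF hol]]
    by (simp add: Int_commute)
  moreover have "0 \<in> ball 0 r \<inter> f -` ball 0 1" using r small by simp
  ultimately obtain r' where "r' > 0" and sub: "ball 0 r' \<subseteq> ball 0 r \<inter> f -` ball 0 1"
    by (rule openE)
  moreover have "f holomorphic_on ball 0 r'"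
    using hol sub by (blast intro: holomorphic_on_subset)
  ultimately show ?thesis
    using sub by (intro that) auto
qed

theorem mainTheorem9:
  fixes G :: "complex^'n^'n" and Gp :: "nat \<Rightarrow> complex^'n^'n"
    and A0 B0 :: real and lam :: "complex \<Rightarrow> complex" and lam0v \<sigma> :: complex
  assumes G_pos: "pos_stochastic (\<lambda>i j. G $ i $ j)"
    and Gp_bound: "\<forall>l\<ge>1. op2norm (Gp l) \<le> A0 * B0 ^ (l - 1)"
    and real_stoch: "\<exists>r>0. \<forall>x::real. \<bar>x\<bar> < r \<longrightarrow> pos_stochastic (pert_entry G Gp (complex_of_real x))"
    and branch: "\<exists>r>0. lam holomorphic_on ball 0 r \<and>
                   (\<forall>z\<in>ball 0 r. is_eigenvalue (Tmat G Gp z) (lam z))"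
    and lam0: "lam 0 = lam0v"
    and lam_lt1: "cmod lam0v < 1"
    and sign: "\<sigma> \<in> {1, -1}"
  shows "let mu = (\<lambda>z. lam z + \<sigma> * \<i> * csqrt (1 - (lam z)\<^sup>2)) in
           (\<exists>r>0. \<forall>z\<in>ball 0 r. (\<lambda>n. tcoeff mu n * z ^ n) sums mu z)
         \<and> tcoeff mu 0 = lam0v + \<sigma> * \<i> * csqrt (1 - lam0v\<^sup>2)
         \<and> (\<exists>A B. A > 0 \<and> B > 0 \<and> (\<forall>n\<ge>1. cmod (tcoeff mu n) \<le> A * B ^ (n - 1)))
         \<and> (\<forall>m::nat. \<exists>A B. A > 0 \<and> B > 0 \<and>
               (\<forall>n\<ge>1. cmod (tcoeff (\<lambda>z. (mu z) ^ (2 * m)) n) \<le> A * B ^ (n - 1)))"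
proof -
  define mu where "mu = (\<lambda>z. lam z + \<sigma> * \<i> * csqrt (1 - (lam z)\<^sup>2))"
  obtain r where "r > 0" "lam holomorphic_on ball 0 r" using branch by blast
  then obtain r' where r': "r' > 0" and "lam holomorphic_on ball 0 r'"
    and "\<And>z. z \<in> ball 0 r' \<Longrightarrow> cmod (lam z) < 1"
    using lam0 lam_lt1 by (auto elim: holomorphic_small_near_zero)
  from this(2,3) have hmu: "mu holomorphic_on ball 0 r'"
    unfolding mu_def by (rule holomorphic_on_unitary_branch)
  have "\<exists>r>0. \<forall>z\<in>ball 0 r. (\<lambda>n. tcoeff mu n * z ^ n) sums mu z"
    using hmu r' tcoeff_sums by blast
  moreover have "tcoeff mu 0 = lam0v + \<sigma> * \<i> * csqrt (1 - lam0v\<^sup>2)"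
    by (simp add: tcoeff_def mu_def lam0)
  moreover have "\<exists>A B. A > 0 \<and> B > 0 \<and> (\<forall>n\<ge>1. cmod (tcoeff mu n) \<le> A * B ^ (n - 1))"
    by (metis tcoeff_geometric_bound[OF hmu r'])
  moreover have "\<exists>A B. A > 0 \<and> B > 0 \<and>
      (\<forall>n\<ge>1. cmod (tcoeff (\<lambda>z. (mu z) ^ (2 * m)) n) \<le> A * B ^ (n - 1))" for m
    by (metis tcoeff_geometric_bound[OF holomorphic_on_power[OF hmu] r'])
  ultimately show ?thesis unfolding mu_def Let_def by blast
qed

end
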